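(* Let $\alpha\in(0,1)$ and suppose there exist $b_\alpha>0$ and $M_\alpha\ge\max_{F,G\in\mathcal D^\Delta}\|F-G\|$ such that for all $F\in\mathcal D^\Delta$, $|F(\mathrm{VaR}_\alpha(F)+b_\alpha y)-\alpha|\ge|y|$ for all $y\in[-M_\alpha,M_\alpha]$. Then, with respect to the norm $\|F\|=\max\{\|F\|_\infty,|\int_{-\infty}^0x\,dF(x)|,|\int_0^\infty x\,dF(x)|\}$, for every $M_0$ with $0<M_0<M_\alpha$, $\mathrm{CVaR}_\alpha$ is a smooth EDPM with constants $d_1=\frac{1+v^*}{\alpha}$, $d_2=\frac{2b_\alpha}{\alpha}$ and $M_0$, where $v^*=\max_{F\in\mathcal D^\Delta}|\mathrm{VaR}_\alpha(F)|$.
   Context: Let $K\ge1$, $\mathbb K=\{1,\dots,K\}$, and $F^{(1)},\dots,F^{(K)}$ distribution functions on $\mathbb R$. $\Delta_{K-1}$ is the probability simplex in $\mathbb R^K$, $\mathcal D^\Delta=\{\sum_ip_iF^{(i)}:p\in\Delta_{K-1}\}$; $\hat{\mathcal D}$ is the set of empirical distribution functions $y\mapsto\frac1t\sum_{s\le t}\mathbf 1\{x_s\le y\}$ of all finite real sequences. $\|F\|_\infty=\sup_x|F(x)|$; $L$ is the space of bounded functions on $\mathbb R$ for which the norm above is finite (Lebesgue–Stieltjes integrals), and $L(L,\mathbb R)$ the bounded linear functionals on $L$. $\mathrm{VaR}_\alpha(F)=\inf\{y:F(y)\ge\alpha\}$ and $\mathrm{CVaR}_\alpha(F)=\mathrm{VaR}_\alpha(F)-\frac1\alpha\int_{-\infty}^{\mathrm{VaR}_\alpha(F)}F(y)\,dy$.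 A map $\mathcal U:L\to\mathbb R$ is a smooth EDPM with constants $d_1,d_2\ge0$, $M_0>0$ if there is a map $A:L\to L(L,\mathbb R)$, $F\mapsto A_F$, such that for every $F\in\mathcal D^\Delta$: $|A_F(G-F)|\le d_1\|G-F\|$ for all $G\in\mathcal D^\Delta\cup\hat{\mathcal D}$, and $|\mathcal U(G)-\mathcal U(F)-A_F(G-F)|\le\frac12d_2\|G-F\|^2$ for all $G\in\mathcal D^\Delta\cup\{f\in\hat{\mathcal D}:\|F-f\|\le M_0\}$. *)

theory Defs
  imports "HOL-Analysis.Analysis"
begin

definition is_dist_fn :: "(real \<Rightarrow> real) \<Rightarrow> bool" where
  "is_dist_fn F \<longleftrightarrow> mono F \<and> (\<forall>x. continuous (at_right x) F)
     \<and> (F \<longlongrightarrow> 0) at_bot \<and> (F \<longlongrightarrow> 1) at_top"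

definition prob_simplex :: "nat \<Rightarrow> (nat \<Rightarrow> real) set" where
  "prob_simplex K = {p. (\<forall>i\<in>{1..K}. 0 \<le> p i) \<and> (\<Sum>i=1..K. p i) = 1}"

definition mixtures :: "nat \<Rightarrow> (nat \<Rightarrow> real \<Rightarrow> real) \<Rightarrow> (real \<Rightarrow> real) set" where
  "mixtures K Fs = {(\<lambda>y. \<Sum>i=1..K. p i * Fs i y) | p. p \<in> prob_simplex K}"

definition empirical :: "(real \<Rightarrow> real) set" where
  "empirical = {(\<lambda>y. (\<Sum>s=1..t. if x s \<le> y then 1 else 0) / real t)
                 | (t::nat) (x::nat \<Rightarrow> real). 1 \<le> t}"

text \<open>Lebesgue--Stieltjes calculus: H is written as a difference of two bounded,
  nondecreasing, right-continuous functions whose Lebesgue--Stieltjes measures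
  integrate the identity (so that the first-moment integrals exist).\<close>
definition ls_decomp :: "(real \<Rightarrow> real) \<Rightarrow> (real \<Rightarrow> real) \<Rightarrow> (real \<Rightarrow> real) \<Rightarrow> bool" where
  "ls_decomp H F1 F2 \<longleftrightarrow>
     mono F1 \<and> mono F2 \<and> bounded (range F1) \<and> bounded (range F2)
     \<and> (\<forall>x. continuous (at_right x) F1) \<and> (\<forall>x. continuous (at_right x) F2)
     \<and> (\<forall>x. H x = F1 x - F2 x)
     \<and> integrable (interval_measure F1) (\<lambda>x. x)
     \<and> integrable (interval_measure F2) (\<lambda>x. x)"

definition L_space :: "(real \<Rightarrow> real) set" where
  "L_space = {H. \<exists>F1 F2. ls_decomp H F1 F2}"

definition ls_moment :: "(real \<Rightarrow> real) \<Rightarrow> real set \<Rightarrow> real" where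
  "ls_moment H S = (SOME r. \<exists>F1 F2. ls_decomp H F1 F2 \<and>
      r = (LINT x:S|interval_measure F1. x) - (LINT x:S|interval_measure F2. x))"

definition sup_norm :: "(real \<Rightarrow> real) \<Rightarrow> real" where
  "sup_norm H = (SUP x. \<bar>H x\<bar>)"

definition normL :: "(real \<Rightarrow> real) \<Rightarrow> real" where
  "normL H = max (sup_norm H) (max \<bar>ls_moment H {..0}\<bar> \<bar>ls_moment H {0<..}\<bar>)"

definition bounded_linear_L :: "((real \<Rightarrow> real) \<Rightarrow> real) \<Rightarrow> bool" where
  "bounded_linear_L \<phi> \<longleftrightarrow>
     (\<forall>H1\<in>L_space. \<forall>H2\<in>L_space. \<forall>a b::real.
        \<phi> (\<lambda>x. a * H1 x + b * H2 x) = a * \<phi> H1 + b * \<phi> H2)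
     \<and> (\<exists>C. \<forall>H\<in>L_space. \<bar>\<phi> H\<bar> \<le> C * normL H)"

definition VaR :: "real \<Rightarrow> (real \<Rightarrow> real) \<Rightarrow> real" where
  "VaR \<alpha> F = Inf {y. F y \<ge> \<alpha>}"

definition CVaR :: "real \<Rightarrow> (real \<Rightarrow> real) \<Rightarrow> real" where
  "CVaR \<alpha> F = VaR \<alpha> F - (1 / \<alpha>) * (LINT y:{..VaR \<alpha> F}|lborel. F y)"

definition smooth_EDPM ::
  "nat \<Rightarrow> (nat \<Rightarrow> real \<Rightarrow> real) \<Rightarrow> ((real \<Rightarrow> real) \<Rightarrow> real) \<Rightarrow> real \<Rightarrow> real \<Rightarrow> real \<Rightarrow> bool" where
  "smooth_EDPM K Fs U d1 d2 M0 \<longleftrightarrow> 0 \<le> d1 \<and> 0 \<le> d2 \<and> 0 < M0 \<and>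
    (\<exists>A :: (real \<Rightarrow> real) \<Rightarrow> (real \<Rightarrow> real) \<Rightarrow> real.
       (\<forall>F\<in>L_space. bounded_linear_L (A F)) \<and>
       (\<forall>F\<in>mixtures K Fs.
          (\<forall>G\<in>mixtures K Fs \<union> empirical.
              \<bar>A F (\<lambda>x. G x - F x)\<bar> \<le> d1 * normL (\<lambda>x. G x - F x)) \<and>
          (\<forall>G\<in>mixtures K Fs \<union> {f\<in>empirical. normL (\<lambda>x. F x - f x) \<le> M0}.
              \<bar>U G - U F - A F (\<lambda>x. G x - F x)\<bar> \<le> 1/2 * d2 * (normL (\<lambda>x. G x - F x))\<^sup>2)))"

end

theory Submission
  imports Defs "HOL-Probability.Distribution_Functions"
begin

text \<open>
  The candidate derivative is the Rockafellar--Uryasev functional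
  \<open>A\<^sub>F H = -(1/\<alpha>) \<integral>\<^bsub>(-\<infinity>, VaR\<^sub>\<alpha> F]\<^esub> H\<close>.
  For the first-order bound, split the integral at \<open>0\<close>: by Fubini against the
  Lebesgue--Stieltjes measure of \<open>H\<close>, the part over \<open>(-\<infinity>, 0]\<close> is minus the first-moment
  integral \<open>\<integral>\<^bsub>(-\<infinity>,0]\<^esub> x dH\<close>, bounded by \<open>\<parallel>H\<parallel>\<close>, and the rest runs over an
  interval of length \<open>|VaR\<^sub>\<alpha> F|\<close>, where \<open>|H| \<le> \<parallel>H\<parallel>\<^sub>\<infinity>\<close>.
  For the second-order bound, the remainder \<open>CVaR\<^sub>\<alpha> G - CVaR\<^sub>\<alpha> F - A\<^sub>F (G - F)\<close> equals
  \<open>(1/\<alpha>) \<integral> (\<alpha> - G)\<close> over the interval between \<open>VaR\<^sub>\<alpha> F\<close> and \<open>VaR\<^sub>\<alpha> G\<close>.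
  There \<open>|\<alpha> - G| \<le> \<delta> = \<parallel>G - F\<parallel>\<^sub>\<infinity>\<close>, and the growth condition on \<open>F\<close> confines
  the non-zero part of the integrand to an interval of length \<open>b\<^sub>\<alpha> \<delta>\<close>.
\<close>

section \<open>Monotone functions and Lebesgue--Stieltjes moments\<close>

lemma mono_tendsto_Inf_at_bot:
  fixes f :: "real \<Rightarrow> real"
  assumes "mono f" "bdd_below (range f)"
  shows "(f \<longlongrightarrow> Inf (range f)) at_bot"
proof (rule order_tendstoI)
  fix a assume "a < Inf (range f)"
  then show "eventually (\<lambda>x. a < f x) at_bot"
    using cInf_lower[OF rangeI assms(2)] by (intro always_eventually) (meson less_le_trans)
next
  fix a assume "Inf (range f) < a"
  then obtain y where "f y < a" using cInf_lessD[of "range f" a] by auto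
  then show "eventually (\<lambda>x. f x < a) at_bot"
    unfolding eventually_at_bot_linorder using monoD[OF assms(1)] by (meson le_less_trans)
qed

lemma mono_tendsto_Sup_at_top:
  fixes f :: "real \<Rightarrow> real"
  assumes "mono f" "bdd_above (range f)"
  shows "(f \<longlongrightarrow> Sup (range f)) at_top"
proof (rule order_tendstoI)
  fix a assume "Sup (range f) < a"
  then show "eventually (\<lambda>x. f x < a) at_top"
    using cSup_upper[OF rangeI assms(2)] by (intro always_eventually) (meson le_less_trans)
next
  fix a assume "a < Sup (range f)"
  then obtain y where "a < f y" using less_cSupD[of "range f" a] by auto
  then show "eventually (\<lambda>x. a < f x) at_top"
    unfolding eventually_at_top_linorder using monoD[OF assms(1)] by (meson less_le_trans)
qed

lemma mono_bounded_limits: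
  fixes F :: "real \<Rightarrow> real"
  assumes "mono F" "bounded (range F)"
  obtains l u where "(F \<longlongrightarrow> l) at_bot" "(F \<longlongrightarrow> u) at_top"
  using mono_tendsto_Inf_at_bot[OF assms(1)] mono_tendsto_Sup_at_top[OF assms(1)] assms(2)
  by (meson bounded_imp_bdd_above bounded_imp_bdd_below)

lemma mono_tendsto_at_bot_le:
  fixes f :: "real \<Rightarrow> real"
  assumes "mono f" "(f \<longlongrightarrow> l) at_bot"
  shows "l \<le> f x"
  by (rule tendsto_upperbound[OF assms(2)])
     (auto simp: eventually_at_bot_linorder intro!: exI[of _ x] monoD[OF assms(1)])

lemma mono_tendsto_at_top_ge:
  fixes f :: "real \<Rightarrow> real"
  assumes "mono f" "(f \<longlongrightarrow> u) at_top"
  shows "f x \<le> u"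
  by (rule tendsto_lowerbound[OF assms(2)])
     (auto simp: eventually_at_top_linorder intro!: exI[of _ x] monoD[OF assms(1)])

lemma emeasure_interval_measure_Iic_limit:
  fixes F :: "real \<Rightarrow> real"
  assumes "mono F" "\<And>x. continuous (at_right x) F" "(F \<longlongrightarrow> l) at_bot"
  shows "emeasure (interval_measure F) {..x} = ennreal (F x - l)"
proof -
  have "interval_measure (\<lambda>x. F x - l) = interval_measure F"
    by (simp add: interval_measure_def)
  moreover have "emeasure (interval_measure (\<lambda>x. F x - l)) {..x} = F x - l"
    using assms by (intro emeasure_interval_measure_Iic)
      (auto intro: continuous_diff monoD tendsto_eq_intros)
  ultimately show ?thesis by simp
qed

lemma emeasure_interval_measure_Ioi_limit:
  fixes F :: "real \<Rightarrow> real"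
  assumes F: "mono F" "\<And>x. continuous (at_right x) F" "(F \<longlongrightarrow> l) at_bot"
    and u: "(F \<longlongrightarrow> u) at_top"
  shows "emeasure (interval_measure F) {x<..} = ennreal (u - F x)"
proof -
  let ?\<mu> = "interval_measure F"
  have "interval_measure (\<lambda>x. F x - l) = ?\<mu>"
    by (simp add: interval_measure_def)
  moreover have "emeasure (interval_measure (\<lambda>x. F x - l)) UNIV = u - l"
  proof (rule interval_measure_UNIV)
    show "((\<lambda>x. F x - l) \<longlongrightarrow> 0) at_bot" "((\<lambda>x. F x - l) \<longlongrightarrow> u - l) at_top"
      using tendsto_diff[OF F(3) tendsto_const[of l]] tendsto_diff[OF u tendsto_const[of l]] by auto
    show "0 \<le> u - l"
      using mono_tendsto_at_bot_le[OF F(1,3), of 0] mono_tendsto_at_top_ge[OF F(1) u, of 0] by simp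
  qed (use F(1,2) in \<open>auto intro: continuous_diff monoD\<close>)
  ultimately have UNIV: "emeasure ?\<mu> UNIV = ennreal (u - l)" by simp
  have "emeasure ?\<mu> {x<..} = emeasure ?\<mu> (UNIV - {..x})"
    by (intro arg_cong[where f = "emeasure ?\<mu>"]) auto
  also have "\<dots> = ennreal (u - l) - ennreal (F x - l)"
    using emeasure_interval_measure_Iic_limit[OF F] UNIV by (subst emeasure_Diff) auto
  also have "\<dots> = ennreal (u - F x)"
    using mono_tendsto_at_bot_le[OF F(1,3), of x] by (subst ennreal_minus) auto
  finally show ?thesis .
qed

lemma nn_integral_lower_tail_eq_moment:
  fixes F :: "real \<Rightarrow> real"
  assumes F: "mono F" "\<And>x. continuous (at_right x) F" "(F \<longlongrightarrow> l) at_bot"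
  shows "(\<integral>\<^sup>+ t. ennreal (indicator {..0} t * (F t - l)) \<partial>lborel)
       = (\<integral>\<^sup>+ s. ennreal (indicator {..0} s * - s) \<partial>interval_measure F)"
proof -
  let ?\<mu> = "interval_measure F"
  interpret pair_sigma_finite lborel ?\<mu>
    using sigma_finite_interval_measure[of F] F(1,2)
    by (intro pair_sigma_finite.intro lborel.sigma_finite_measure_axioms) (auto dest: monoD)
  have "(\<lambda>(t, s). indicator {s..0} t :: ennreal) \<in> borel_measurable (lborel \<Otimes>\<^sub>M ?\<mu>)"
    unfolding split_beta' indicator_def atLeastAtMost_iff by measurable
  from Fubini'[OF this]
  have "(\<integral>\<^sup>+ t. (\<integral>\<^sup>+ s. indicator {s..0} t \<partial>?\<mu>) \<partial>lborel)
      = (\<integral>\<^sup>+ s. (\<integral>\<^sup>+ t. indicator {s..0} t \<partial>lborel) \<partial>?\<mu>)" by simp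
  moreover have "(\<integral>\<^sup>+ s. indicator {s..0} t \<partial>?\<mu>) = ennreal (indicator {..0} t * (F t - l))" for t
  proof -
    have "(\<lambda>s. indicator {s..0} t :: ennreal) = (\<lambda>s. indicator {..0} t * indicator {..t} s)"
      by (auto simp: fun_eq_iff split: split_indicator)
    then show ?thesis
      by (simp add: nn_integral_cmult emeasure_interval_measure_Iic_limit[OF F] split: split_indicator)
  qed
  moreover have "(\<integral>\<^sup>+ t. indicator {s..0} t \<partial>lborel) = ennreal (indicator {..0} s * - s)" for s
    by (subst nn_integral_indicator) (auto simp: indicator_def)
  ultimately show ?thesis by simp
qed

lemma nn_integral_upper_tail_eq_moment:
  fixes F :: "real \<Rightarrow> real"
  assumes F: "mono F" "\<And>x. continuous (at_right x) F" "(F \<longlongrightarrow> l) at_bot"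
    and u: "(F \<longlongrightarrow> u) at_top"
  shows "(\<integral>\<^sup>+ t. ennreal (indicator {0<..} t * (u - F t)) \<partial>lborel)
       = (\<integral>\<^sup>+ s. ennreal (indicator {0<..} s * s) \<partial>interval_measure F)"
proof -
  let ?\<mu> = "interval_measure F"
  interpret pair_sigma_finite lborel ?\<mu>
    using sigma_finite_interval_measure[of F] F(1,2)
    by (intro pair_sigma_finite.intro lborel.sigma_finite_measure_axioms) (auto dest: monoD)
  have "(\<lambda>(t, s). indicator {0<..<s} t :: ennreal) \<in> borel_measurable (lborel \<Otimes>\<^sub>M ?\<mu>)"
    unfolding split_beta' indicator_def greaterThanLessThan_iff by measurable
  from Fubini'[OF this]
  have "(\<integral>\<^sup>+ t. (\<integral>\<^sup>+ s. indicator {0<..<s} t \<partial>?\<mu>) \<partial>lborel)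
      = (\<integral>\<^sup>+ s. (\<integral>\<^sup>+ t. indicator {0<..<s} t \<partial>lborel) \<partial>?\<mu>)" by simp
  moreover have "(\<integral>\<^sup>+ s. indicator {0<..<s} t \<partial>?\<mu>) = ennreal (indicator {0<..} t * (u - F t))" for t
  proof -
    have "(\<lambda>s. indicator {0<..<s} t :: ennreal) = (\<lambda>s. indicator {0<..} t * indicator {t<..} s)"
      by (auto simp: fun_eq_iff split: split_indicator)
    then show ?thesis
      by (simp add: nn_integral_cmult emeasure_interval_measure_Ioi_limit[OF F u] split: split_indicator)
  qed
  moreover have "(\<integral>\<^sup>+ t. indicator {0<..<s} t \<partial>lborel) = ennreal (indicator {0<..} s * s)" for s
    by (subst nn_integral_indicator) (auto simp: indicator_def)
  ultimately show ?thesis by simp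
qed

lemma integrable_interval_measure_id_iff_tails:
  fixes F :: "real \<Rightarrow> real"
  assumes F: "mono F" "\<And>x. continuous (at_right x) F" "(F \<longlongrightarrow> l) at_bot"
    and u: "(F \<longlongrightarrow> u) at_top"
  shows "integrable (interval_measure F) (\<lambda>x. x) \<longleftrightarrow>
    set_integrable lborel {..0} (\<lambda>t. F t - l) \<and> set_integrable lborel {0<..} (\<lambda>t. u - F t)"
proof -
  let ?\<mu> = "interval_measure F"
  have F_meas [measurable]: "F \<in> borel_measurable borel"
    using borel_measurable_mono[OF F(1)] by simp
  have lower_nonneg: "0 \<le> F t - l" and upper_nonneg: "0 \<le> u - F t" for t
    using mono_tendsto_at_bot_le[OF F(1,3)] mono_tendsto_at_top_ge[OF F(1) u] by auto
  have "(\<integral>\<^sup>+ x. ennreal (norm x) \<partial>?\<mu>)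
      = (\<integral>\<^sup>+ x. ennreal (indicator {..0} x * - x) + ennreal (indicator {0<..} x * x) \<partial>?\<mu>)"
    by (intro nn_integral_cong) (auto simp: indicator_def)
  also have "\<dots> = (\<integral>\<^sup>+ t. ennreal (indicator {..0} t * (F t - l)) \<partial>lborel)
      + (\<integral>\<^sup>+ t. ennreal (indicator {0<..} t * (u - F t)) \<partial>lborel)"
    by (simp add: nn_integral_add nn_integral_lower_tail_eq_moment[OF F]
        nn_integral_upper_tail_eq_moment[OF F u])
  finally have "(\<integral>\<^sup>+ x. ennreal (norm x) \<partial>?\<mu>) = \<dots>" .
  moreover have "(\<integral>\<^sup>+ t. ennreal (indicator {..0} t * (F t - l)) \<partial>lborel)
      = (\<integral>\<^sup>+ t. ennreal (norm (indicator {..0} t *\<^sub>R (F t - l))) \<partial>lborel)"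
    "(\<integral>\<^sup>+ t. ennreal (indicator {0<..} t * (u - F t)) \<partial>lborel)
      = (\<integral>\<^sup>+ t. ennreal (norm (indicator {0<..} t *\<^sub>R (u - F t))) \<partial>lborel)"
    using lower_nonneg upper_nonneg by (auto intro!: nn_integral_cong simp: indicator_def)
  ultimately show ?thesis
    unfolding set_integrable_def integrable_iff_bounded by auto
qed

lemma lower_tail_integral_eq_moment:
  fixes F :: "real \<Rightarrow> real"
  assumes F: "mono F" "\<And>x. continuous (at_right x) F" "(F \<longlongrightarrow> l) at_bot"
    and u: "(F \<longlongrightarrow> u) at_top" and int: "integrable (interval_measure F) (\<lambda>x. x)"
  shows "(LINT t:{..0}|lborel. F t - l) = - (LINT x:{..0}|interval_measure F. x)"
proof -
  let ?\<mu> = "interval_measure F"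
  have lower: "set_integrable lborel {..0} (\<lambda>t. F t - l)"
    using int integrable_interval_measure_id_iff_tails[OF F u] by blast
  have moment: "set_integrable ?\<mu> {..0} (\<lambda>x. x)"
    unfolding set_integrable_def by (rule integrable_mult_indicator) (use int in auto)
  have "ennreal (LINT t:{..0}|lborel. F t - l)
      = (\<integral>\<^sup>+ t. ennreal (indicator {..0} t * (F t - l)) \<partial>lborel)"
    using lower mono_tendsto_at_bot_le[OF F(1,3)] unfolding set_integrable_def set_lebesgue_integral_def
    by (subst nn_integral_eq_integral) (auto simp: indicator_def)
  also have "\<dots> = (\<integral>\<^sup>+ s. ennreal (indicator {..0} s * - s) \<partial>?\<mu>)"
    by (rule nn_integral_lower_tail_eq_moment[OF F])
  also have "\<dots> = ennreal (LINT x:{..0}|?\<mu>. - x)"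
    using moment unfolding set_integrable_def set_lebesgue_integral_def
    by (subst nn_integral_eq_integral) (auto simp: indicator_def)
  finally have "(LINT t:{..0}|lborel. F t - l) = (LINT x:{..0}|?\<mu>. - x)"
  proof (subst (asm) ennreal_inj)
    show "0 \<le> (LINT t:{..0}|lborel. F t - l)"
      unfolding set_lebesgue_integral_def
      by (intro integral_nonneg_AE AE_I2) (simp add: indicator_def mono_tendsto_at_bot_le[OF F(1,3)])
    show "0 \<le> (LINT x:{..0}|?\<mu>. - x)"
      unfolding set_lebesgue_integral_def by (intro integral_nonneg_AE AE_I2) (simp add: indicator_def)
  qed
  then show ?thesis
    by (simp add: set_integral_uminus moment)
qed

section \<open>Integrals of bounded functions over half-lines\<close>

lemma set_integrable_Ioc_bounded:
  fixes f :: "real \<Rightarrow> real"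
  assumes "f \<in> borel_measurable borel" "\<And>x. \<bar>f x\<bar> \<le> B"
  shows "set_integrable lborel {a<..b} f"
  unfolding set_integrable_def
proof (rule integrableI_bounded_set[where A = "{a<..b}" and B = B])
  show "emeasure lborel {a<..b} < \<infinity>"
    by (cases "a \<le> b") auto
qed (use assms in \<open>auto simp: indicator_def\<close>)

lemma abs_set_integral_Ioc_le:
  fixes f :: "real \<Rightarrow> real"
  assumes "f \<in> borel_measurable borel" "\<And>x. \<bar>f x\<bar> \<le> B" "a \<le> b"
  shows "\<bar>LINT x:{a<..b}|lborel. f x\<bar> \<le> B * (b - a)"
proof -
  have "\<bar>LINT x:{a<..b}|lborel. f x\<bar> \<le> (LINT x:{a<..b}|lborel. \<bar>f x\<bar>)"
    using set_integral_norm_bound[OF set_integrable_Ioc_bounded[OF assms(1,2)]] by simp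
  also have "\<dots> \<le> (LINT x:{a<..b}|lborel. B)"
    using assms(1,2) by (intro set_integral_mono set_integrable_Ioc_bounded[where B = "\<bar>B\<bar>"])
      (auto intro: order_trans[OF _ abs_ge_self])
  also have "\<dots> = B * (b - a)"
    using assms(3) by (simp add: set_integral_const mult.commute)
  finally show ?thesis .
qed

lemma set_integral_le_Ioc_bound:
  fixes g :: "real \<Rightarrow> real"
  assumes "set_integrable lborel A g" "0 \<le> c" "a \<le> b"
    and "AE y in lborel. y \<in> A \<longrightarrow> g y \<le> c * indicator {a<..b} y"
  shows "(LINT y:A|lborel. g y) \<le> c * (b - a)"
proof -
  have "(LINT y:A|lborel. g y) = (LBINT y. indicator A y * g y)"
    by (simp add: set_lebesgue_integral_def)
  also have "\<dots> \<le> (LBINT y. c * indicator {a<..b} y)"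
    using assms unfolding set_integrable_def
    by (intro integral_mono_AE) (auto elim!: eventually_mono split: split_indicator)
  also have "\<dots> = c * (b - a)"
    using assms(3) by simp
  finally show ?thesis .
qed

lemma set_integral_Iic_diff:
  fixes f :: "real \<Rightarrow> real"
  assumes "set_integrable lborel {..b} f" "a \<le> b"
  shows "(LINT x:{..b}|lborel. f x) - (LINT x:{..a}|lborel. f x) = (LINT x:{a<..b}|lborel. f x)"
proof -
  have "set_integrable lborel {..a} f" "set_integrable lborel {a<..b} f"
    using assms by (auto intro: set_integrable_subset)
  then have "(LINT x:{..a} \<union> {a<..b}|lborel. f x)
      = (LINT x:{..a}|lborel. f x) + (LINT x:{a<..b}|lborel. f x)"
    by (intro set_integral_Un) auto
  moreover have "{..a} \<union> {a<..b} = {..b}" using assms(2) by auto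
  ultimately show ?thesis by simp
qed

lemma set_integral_Ioc_const_diff:
  fixes g :: "real \<Rightarrow> real"
  assumes "set_integrable lborel {..v} g" "u \<le> v"
  shows "(LINT y:{u<..v}|lborel. c - g y)
    = c * (v - u) - ((LINT y:{..v}|lborel. g y) - (LINT y:{..u}|lborel. g y))"
proof -
  have "set_integrable lborel {u<..v} g"
    using assms(1) by (rule set_integrable_subset) auto
  moreover have "set_integrable lborel {u<..v} (\<lambda>_. c)"
    by (rule set_integrable_Ioc_bounded[where B = "\<bar>c\<bar>"]) auto
  ultimately show ?thesis
    using assms(2) set_integral_Iic_diff[OF assms] by (simp add: set_integral_const)
qed

lemma set_integrable_Iic_if_bounded:
  fixes f :: "real \<Rightarrow> real"
  assumes "f \<in> borel_measurable borel" "\<And>x. \<bar>f x\<bar> \<le> B" "set_integrable lborel {..a} f"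
  shows "set_integrable lborel {..b} f"
proof (cases "b \<le> a")
  case True
  then show ?thesis by (intro set_integrable_subset[OF assms(3)]) auto
next
  case False
  then have "{..b} = {..a} \<union> {a<..b}" by auto
  then show ?thesis
    using set_integrable_Un[OF assms(3) set_integrable_Ioc_bounded[OF assms(1,2)]] by simp
qed

lemma abs_set_integral_Iic_diff_le:
  fixes f :: "real \<Rightarrow> real"
  assumes "f \<in> borel_measurable borel" "\<And>x. \<bar>f x\<bar> \<le> B"
    and "set_integrable lborel {..a} f" "set_integrable lborel {..b} f"
  shows "\<bar>(LINT x:{..b}|lborel. f x) - (LINT x:{..a}|lborel. f x)\<bar> \<le> B * \<bar>b - a\<bar>"
proof (cases "a \<le> b")
  case True
  then show ?thesis
    using abs_set_integral_Ioc_le[OF assms(1,2) True] set_integral_Iic_diff[OF assms(4) True] by simp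
next
  case False
  then show ?thesis
    using abs_set_integral_Ioc_le[OF assms(1,2), of b a] set_integral_Iic_diff[OF assms(3), of b]
    by (simp add: abs_minus_commute)
qed

section \<open>The space L\<close>

lemma ls_decomp_tails:
  assumes "ls_decomp H F1 F2"
  obtains l u where "(H \<longlongrightarrow> l) at_bot" "(H \<longlongrightarrow> u) at_top"
    "set_integrable lborel {..0} (\<lambda>t. H t - l)" "set_integrable lborel {0<..} (\<lambda>t. u - H t)"
    "(LINT t:{..0}|lborel. H t - l)
       = - ((LINT x:{..0}|interval_measure F1. x) - (LINT x:{..0}|interval_measure F2. x))"
proof -
  from assms have F1: "mono F1" "\<And>x. continuous (at_right x) F1" "bounded (range F1)"
    and F2: "mono F2" "\<And>x. continuous (at_right x) F2" "bounded (range F2)"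
    and H: "H = (\<lambda>x. F1 x - F2 x)"
    and int: "integrable (interval_measure F1) (\<lambda>x. x)" "integrable (interval_measure F2) (\<lambda>x. x)"
    unfolding ls_decomp_def by auto
  obtain l1 u1 where l1: "(F1 \<longlongrightarrow> l1) at_bot" and u1: "(F1 \<longlongrightarrow> u1) at_top"
    using mono_bounded_limits[OF F1(1,3)] .
  obtain l2 u2 where l2: "(F2 \<longlongrightarrow> l2) at_bot" and u2: "(F2 \<longlongrightarrow> u2) at_top"
    using mono_bounded_limits[OF F2(1,3)] .
  note tails1 = int(1)[unfolded integrable_interval_measure_id_iff_tails[OF F1(1,2) l1 u1]]
  note tails2 = int(2)[unfolded integrable_interval_measure_id_iff_tails[OF F2(1,2) l2 u2]]
  have lower: "(\<lambda>t. H t - (l1 - l2)) = (\<lambda>t. (F1 t - l1) - (F2 t - l2))"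
    and upper: "(\<lambda>t. (u1 - u2) - H t) = (\<lambda>t. (u1 - F1 t) - (u2 - F2 t))"
    unfolding H by auto
  show thesis
  proof (rule that[of "l1 - l2" "u1 - u2"])
    show "(H \<longlongrightarrow> l1 - l2) at_bot" "(H \<longlongrightarrow> u1 - u2) at_top"
      unfolding H by (intro tendsto_diff l1 l2 u1 u2)+
    show "set_integrable lborel {..0} (\<lambda>t. H t - (l1 - l2))"
      "set_integrable lborel {0<..} (\<lambda>t. (u1 - u2) - H t)"
      unfolding lower upper using tails1 tails2 by auto
    show "(LINT t:{..0}|lborel. H t - (l1 - l2))
       = - ((LINT x:{..0}|interval_measure F1. x) - (LINT x:{..0}|interval_measure F2. x))"
      unfolding lower using tails1 tails2
      by (simp add: lower_tail_integral_eq_moment[OF F1(1,2) l1 u1 int(1)]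
          lower_tail_integral_eq_moment[OF F2(1,2) l2 u2 int(2)])
  qed
qed

lemma L_space_bounded:
  assumes "H \<in> L_space"
  shows "bounded (range H)"
proof -
  obtain F1 F2 where "ls_decomp H F1 F2"
    using assms unfolding L_space_def by blast
  then have "H = (\<lambda>x. F1 x - F2 x)" "bounded (range F1)" "bounded (range F2)"
    unfolding ls_decomp_def by auto
  then show ?thesis
    by (simp add: bounded_minus_comp)
qed

lemma L_space_measurable:
  assumes "H \<in> L_space"
  shows "H \<in> borel_measurable borel"
proof -
  obtain F1 F2 where "ls_decomp H F1 F2"
    using assms unfolding L_space_def by blast
  then have "H = (\<lambda>x. F1 x - F2 x)" "mono F1" "mono F2"
    unfolding ls_decomp_def by auto
  then show ?thesis
    by (simp add: borel_measurable_mono borel_measurable_diff)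
qed

lemma L_space_lower_tail:
  assumes "H \<in> L_space"
  shows "(H \<longlongrightarrow> Lim at_bot H) at_bot"
    and "set_integrable lborel {..0} (\<lambda>t. H t - Lim at_bot H)"
    and "ls_moment H {..0} = - (LINT t:{..0}|lborel. H t - Lim at_bot H)"
proof -
  have "\<exists>r F1 F2. ls_decomp H F1 F2 \<and>
      r = (LINT x:{..0}|interval_measure F1. x) - (LINT x:{..0}|interval_measure F2. x)"
    using assms unfolding L_space_def by blast
  \<comment> \<open>Whatever decomposition the choice in \<open>ls_moment\<close> picks, the value is the same tail integral.\<close>
  from someI_ex[OF this] obtain F1 F2 where decomp: "ls_decomp H F1 F2"
    and moment: "ls_moment H {..0}
      = (LINT x:{..0}|interval_measure F1. x) - (LINT x:{..0}|interval_measure F2. x)"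
    unfolding ls_moment_def by blast
  obtain l where l: "(H \<longlongrightarrow> l) at_bot" and "set_integrable lborel {..0} (\<lambda>t. H t - l)"
    and "(LINT t:{..0}|lborel. H t - l) = - ls_moment H {..0}"
    using ls_decomp_tails[OF decomp] unfolding moment by metis
  moreover have "Lim at_bot H = l"
    using tendsto_Lim[OF trivial_limit_at_bot_linorder l] by simp
  ultimately show "(H \<longlongrightarrow> Lim at_bot H) at_bot"
    and "set_integrable lborel {..0} (\<lambda>t. H t - Lim at_bot H)"
    and "ls_moment H {..0} = - (LINT t:{..0}|lborel. H t - Lim at_bot H)"
    by simp_all
qed

lemma abs_le_sup_norm:
  assumes "bounded (range H)"
  shows "\<bar>H x\<bar> \<le> sup_norm H"
  unfolding sup_norm_def
  using assms by (intro cSUP_upper) (auto simp: bounded_iff intro: bdd_aboveI2)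

lemma sup_norm_diff_commute: "sup_norm (\<lambda>x. F x - G x) = sup_norm (\<lambda>x. G x - F x)"
  unfolding sup_norm_def by (simp add: abs_minus_commute)

lemma sup_norm_le_normL: "sup_norm H \<le> normL H"
  unfolding normL_def by simp

lemma L_space_abs_sub_Lim_le:
  assumes "H \<in> L_space"
  shows "\<bar>H x - Lim at_bot H\<bar> \<le> 2 * sup_norm H"
proof -
  have bound: "\<bar>H y\<bar> \<le> sup_norm H" for y
    using abs_le_sup_norm[OF L_space_bounded[OF assms]] .
  have "\<bar>Lim at_bot H\<bar> \<le> sup_norm H"
    using tendsto_rabs[OF L_space_lower_tail(1)[OF assms]]
    by (rule tendsto_upperbound) (auto simp: bound)
  with bound[of x] show ?thesis by linarith
qed

lemma L_space_set_integrable_Iic: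
  assumes "H \<in> L_space"
  shows "set_integrable lborel {..c} (\<lambda>t. H t - Lim at_bot H)"
  using L_space_measurable[OF assms]
  by (intro set_integrable_Iic_if_bounded[OF _ L_space_abs_sub_Lim_le[OF assms]
        L_space_lower_tail(2)[OF assms]]) auto

section \<open>Distribution functions and value at risk\<close>

lemma is_dist_fnD:
  assumes "is_dist_fn F"
  shows "mono F" "\<And>x. continuous (at_right x) F" "(F \<longlongrightarrow> 0) at_bot" "(F \<longlongrightarrow> 1) at_top"
  using assms unfolding is_dist_fn_def by auto

lemma is_dist_fn_abs_le_1:
  assumes "is_dist_fn F"
  shows "\<bar>F x\<bar> \<le> 1"
  using mono_tendsto_at_bot_le[OF is_dist_fnD(1,3)[OF assms]]
    mono_tendsto_at_top_ge[OF is_dist_fnD(1,4)[OF assms]]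
  by (simp add: abs_le_iff)

lemma is_dist_fn_measurable:
  assumes "is_dist_fn F"
  shows "F \<in> borel_measurable borel"
  using borel_measurable_mono[OF is_dist_fnD(1)[OF assms]] by simp

lemma set_integrable_Ioc_dist_fn:
  assumes "is_dist_fn G"
  shows "set_integrable lborel {u<..v} (\<lambda>y. c - G y)" "set_integrable lborel {u<..v} (\<lambda>y. G y - c)"
proof -
  have "\<bar>c - G y\<bar> \<le> \<bar>c\<bar> + 1" for y
    using abs_triangle_ineq4[of c "G y"] is_dist_fn_abs_le_1[OF assms, of y] by linarith
  then show "set_integrable lborel {u<..v} (\<lambda>y. c - G y)" "set_integrable lborel {u<..v} (\<lambda>y. G y - c)"
    using is_dist_fn_measurable[OF assms]
    by (auto intro!: set_integrable_Ioc_bounded[where B = "\<bar>c\<bar> + 1"] simp: abs_minus_commute)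
qed

lemma VaR_le_iff:
  assumes F: "is_dist_fn F" and \<alpha>: "0 < \<alpha>" "\<alpha> < 1"
  shows "VaR \<alpha> F \<le> y \<longleftrightarrow> \<alpha> \<le> F y"
proof -
  let ?S = "{y. \<alpha> \<le> F y}"
  note mono = monoD[OF is_dist_fnD(1)[OF F]]
  obtain z where "\<alpha> < F z"
    using order_tendstoD(1)[OF is_dist_fnD(4)[OF F] \<alpha>(2)] by (auto simp: eventually_at_top_linorder)
  then have nonempty: "?S \<noteq> {}" by (auto intro: less_imp_le)
  obtain m where "\<And>y. y \<le> m \<Longrightarrow> F y < \<alpha>"
    using order_tendstoD(2)[OF is_dist_fnD(3)[OF F] \<alpha>(1)] by (auto simp: eventually_at_bot_linorder)
  then have bdd: "bdd_below ?S"
    by (intro bdd_belowI[of _ m]) (meson linorder_not_le mem_Collect_eq order.strict_iff_not)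
  have "\<alpha> \<le> F z" if less: "VaR \<alpha> F < z" for z
  proof -
    obtain s where "\<alpha> \<le> F s" "s < z"
      using cInf_lessD[OF nonempty less[unfolded VaR_def]] by auto
    then show ?thesis using mono[of s z] by simp
  qed
  then have at_VaR: "\<alpha> \<le> F (VaR \<alpha> F)"
    using is_dist_fnD(2)[OF F, of "VaR \<alpha> F"]
    by (intro tendsto_lowerbound[where F = "at_right (VaR \<alpha> F)" and f = F])
      (auto simp: continuous_within eventually_at_right_less eventually_at_filter)
  show ?thesis
  proof
    assume "VaR \<alpha> F \<le> y"
    then show "\<alpha> \<le> F y" using at_VaR mono by (meson order_trans)
  next
    assume "\<alpha> \<le> F y"
    then show "VaR \<alpha> F \<le> y" unfolding VaR_def using bdd by (intro cInf_lower) auto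
  qed
qed

lemma is_dist_fn_convex_sum:
  assumes I: "finite I" and p: "\<And>i. i \<in> I \<Longrightarrow> 0 \<le> p i" "sum p I = 1"
    and F: "\<And>i. i \<in> I \<Longrightarrow> is_dist_fn (F i)"
  shows "is_dist_fn (\<lambda>y. \<Sum>i\<in>I. p i * F i y)"
  unfolding is_dist_fn_def
proof (intro conjI allI monoI)
  fix y z :: real assume "y \<le> z"
  then have "F i y \<le> F i z" if "i \<in> I" for i
    using is_dist_fnD(1)[OF F[OF that]] by (simp add: monoD)
  then show "(\<Sum>i\<in>I. p i * F i y) \<le> (\<Sum>i\<in>I. p i * F i z)"
    using p(1) by (intro sum_mono mult_left_mono)
next
  fix x show "continuous (at_right x) (\<lambda>y. \<Sum>i\<in>I. p i * F i y)"
    using is_dist_fnD(2)[OF F] by (intro continuous_sum continuous_mult continuous_const)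
next
  show "((\<lambda>y. \<Sum>i\<in>I. p i * F i y) \<longlongrightarrow> 0) at_bot"
    using tendsto_sum[of I "\<lambda>i y. p i * F i y" "\<lambda>i. p i * 0"] is_dist_fnD(3)[OF F]
    by (simp add: tendsto_mult_right_zero)
next
  have "((\<lambda>y. \<Sum>i\<in>I. p i * F i y) \<longlongrightarrow> (\<Sum>i\<in>I. p i * 1)) at_top"
    using is_dist_fnD(4)[OF F] by (intro tendsto_sum tendsto_mult tendsto_const)
  then show "((\<lambda>y. \<Sum>i\<in>I. p i * F i y) \<longlongrightarrow> 1) at_top"
    using p(2) by simp
qed

lemma abs_VaR_convex_sum_le:
  assumes I: "finite I" and p: "\<And>i. i \<in> I \<Longrightarrow> 0 \<le> p i" "sum p I = 1"
    and F: "\<And>i. i \<in> I \<Longrightarrow> is_dist_fn (F i)" and \<alpha>: "0 < \<alpha>" "\<alpha> < 1"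
    and Y: "\<And>i. i \<in> I \<Longrightarrow> \<bar>VaR \<alpha> (F i)\<bar> \<le> Y"
  shows "\<bar>VaR \<alpha> (\<lambda>y. \<Sum>i\<in>I. p i * F i y)\<bar> \<le> Y"
proof -
  let ?G = "\<lambda>y. \<Sum>i\<in>I. p i * F i y"
  have "is_dist_fn ?G"
    using I p F by (rule is_dist_fn_convex_sum)
  note G_VaR_le_iff = VaR_le_iff[OF this \<alpha>]
  note F_VaR_le_iff = VaR_le_iff[OF F \<alpha>]
  have upper: "\<alpha> \<le> ?G Y"
  proof -
    have "(\<Sum>i\<in>I. p i * \<alpha>) \<le> ?G Y"
      using Y F_VaR_le_iff p(1) by (intro sum_mono mult_left_mono) (auto simp: abs_le_iff)
    then show ?thesis
      using p(2) by (simp add: sum_distrib_right[symmetric])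
  qed
  have lower: "?G y < \<alpha>" if "y < - Y" for y
  proof -
    have "\<not> (\<forall>i\<in>I. p i \<le> 0)"
      using sum_nonpos[of I p] p(2) by auto
    then obtain j where j: "j \<in> I" "0 < p j"
      by auto
    have "F i y < \<alpha>" if "i \<in> I" for i
      using F_VaR_le_iff[OF that, of y] Y[OF that] \<open>y < - Y\<close> by auto
    then have "?G y < (\<Sum>i\<in>I. p i * \<alpha>)"
      using j p(1) I by (intro sum_strict_mono_ex1) (auto intro: mult_left_mono less_imp_le bexI[of _ j])
    then show ?thesis
      using p(2) by (simp add: sum_distrib_right[symmetric])
  qed
  have "\<alpha> \<le> ?G (VaR \<alpha> ?G)"
    by (rule G_VaR_le_iff[THEN iffD1]) simp
  then have "- Y \<le> VaR \<alpha> ?G"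
    using lower by (meson linorder_not_le)
  moreover have "VaR \<alpha> ?G \<le> Y"
    using upper G_VaR_le_iff by blast
  ultimately show ?thesis by linarith
qed

definition has_finite_mean :: "(real \<Rightarrow> real) \<Rightarrow> bool" where
  "has_finite_mean F \<longleftrightarrow> set_integrable lborel {..0} F \<and> set_integrable lborel {0<..} (\<lambda>t. 1 - F t)"

lemma set_integrable_convex_sum:
  fixes f :: "'i \<Rightarrow> real \<Rightarrow> real"
  assumes "\<And>i. i \<in> I \<Longrightarrow> set_integrable lborel A (f i)"
  shows "set_integrable lborel A (\<lambda>y. \<Sum>i\<in>I. p i * f i y)"
proof -
  have "indicator A y *\<^sub>R (\<Sum>i\<in>I. p i * f i y) = (\<Sum>i\<in>I. p i * (indicator A y *\<^sub>R f i y))" for y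
    by (simp add: sum_distrib_left mult.left_commute)
  then show ?thesis
    using assms unfolding set_integrable_def by (simp add: integrable_sum integrable_mult_right)
qed

lemma has_finite_mean_convex_sum:
  assumes "sum p I = 1" "\<And>i. i \<in> I \<Longrightarrow> has_finite_mean (F i)"
  shows "has_finite_mean (\<lambda>y. \<Sum>i\<in>I. p i * F i y)"
proof -
  have "(\<lambda>t. 1 - (\<Sum>i\<in>I. p i * F i t)) = (\<lambda>t. \<Sum>i\<in>I. p i * (1 - F i t))"
    using assms(1) by (simp add: sum_subtractf right_diff_distrib)
  then show ?thesis
    using assms(2) unfolding has_finite_mean_def by (simp add: set_integrable_convex_sum)
qed

lemma dist_fn_set_integrable_Iic:
  assumes "is_dist_fn F" "has_finite_mean F"
  shows "set_integrable lborel {..c} F"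
  using assms(2) unfolding has_finite_mean_def
  by (blast intro: set_integrable_Iic_if_bounded[OF is_dist_fn_measurable[OF assms(1)]
        is_dist_fn_abs_le_1[OF assms(1)]])

lemma has_finite_mean_if_L_space:
  assumes F: "is_dist_fn F" and "F \<in> L_space"
  shows "has_finite_mean F"
proof -
  obtain F1 F2 where "ls_decomp F F1 F2"
    using assms(2) unfolding L_space_def by blast
  then obtain l u where l: "(F \<longlongrightarrow> l) at_bot" and u: "(F \<longlongrightarrow> u) at_top"
    and "set_integrable lborel {..0} (\<lambda>t. F t - l)" "set_integrable lborel {0<..} (\<lambda>t. u - F t)"
    by (rule ls_decomp_tails)
  moreover have "l = 0" "u = 1"
    using tendsto_unique[OF _ l is_dist_fnD(3)[OF F]] tendsto_unique[OF _ u is_dist_fnD(4)[OF F]]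
    by auto
  ultimately show ?thesis
    unfolding has_finite_mean_def by simp
qed

lemma diff_in_L_space:
  assumes F: "is_dist_fn F" "has_finite_mean F" and G: "is_dist_fn G" "has_finite_mean G"
  shows "(\<lambda>x. G x - F x) \<in> L_space"
proof -
  have "integrable (interval_measure H) (\<lambda>x. x)" if "is_dist_fn H" "has_finite_mean H" for H
    using that(2) unfolding integrable_interval_measure_id_iff_tails[OF is_dist_fnD[OF that(1)]]
    by (simp add: has_finite_mean_def)
  moreover have "bounded (range H)" if "is_dist_fn H" for H
    using is_dist_fn_abs_le_1[OF that] unfolding bounded_iff by auto
  ultimately have "ls_decomp (\<lambda>x. G x - F x) G F"
    using F G unfolding ls_decomp_def by (simp add: is_dist_fnD(1,2))
  then show ?thesis
    unfolding L_space_def by blast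
qed

lemma Lim_at_bot_dist_fn_diff:
  assumes "is_dist_fn F" "is_dist_fn G"
  shows "Lim at_bot (\<lambda>x. G x - F x) = 0"
  using tendsto_diff[OF is_dist_fnD(3)[OF assms(2)] is_dist_fnD(3)[OF assms(1)]]
  by (intro tendsto_Lim) auto

lemma is_dist_fn_step: "is_dist_fn (\<lambda>y. if a \<le> y then 1 else 0)"
  unfolding is_dist_fn_def
proof (intro conjI allI monoI)
  fix x
  have "eventually (\<lambda>y. (a \<le> y) = (a \<le> x)) (at_right x)"
  proof (cases "a \<le> x")
    case False
    then have "x < a" by simp
    then show ?thesis
      unfolding eventually_at_right[OF \<open>x < a\<close>] using False by (auto intro!: exI[of _ a])
  qed (auto intro: eventually_mono[OF eventually_at_right_less])
  then show "continuous (at_right x) (\<lambda>y. if a \<le> y then 1 else 0 :: real)"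
    unfolding continuous_within by (rule tendsto_eventually[OF eventually_mono]) auto
next
  show "((\<lambda>y. if a \<le> y then 1 else 0 :: real) \<longlongrightarrow> 0) at_bot"
    by (rule tendsto_eventually) (auto simp: eventually_at_bot_dense intro: exI[of _ a])
  show "((\<lambda>y. if a \<le> y then 1 else 0 :: real) \<longlongrightarrow> 1) at_top"
    by (rule tendsto_eventually) (auto simp: eventually_at_top_linorder)
qed auto

lemma has_finite_mean_step: "has_finite_mean (\<lambda>y. if a \<le> y then 1 else 0)"
proof -
  have "(\<lambda>y. indicator {..0} y *\<^sub>R (if a \<le> y then 1 else 0)) = indicat_real {a..0}"
    "(\<lambda>y. indicator {0<..} y *\<^sub>R (1 - (if a \<le> y then 1 else 0))) = indicat_real {0<..<a}"
    by (auto simp: indicator_def)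
  moreover have "emeasure lborel {a..0} < \<infinity>" "emeasure lborel {0<..<a} < \<infinity>"
    by (cases "a \<le> 0"; simp)+
  ultimately show ?thesis
    unfolding has_finite_mean_def set_integrable_def by (simp add: integrable_real_indicator)
qed

lemma empirical_dist_fn:
  assumes "G \<in> empirical"
  shows "is_dist_fn G" "has_finite_mean G"
proof -
  obtain t :: nat and x where t: "1 \<le> t"
    and G: "G = (\<lambda>y. (\<Sum>s=1..t. if x s \<le> y then 1 else 0) / real t)"
    using assms unfolding empirical_def by blast
  have G_convex_sum: "G = (\<lambda>y. \<Sum>s\<in>{1..t}. 1 / real t * (if x s \<le> y then 1 else 0))"
    unfolding G by (simp add: sum_divide_distrib)
  have "sum (\<lambda>s. 1 / real t) {1..t} = 1"
    using t by simp
  then show "is_dist_fn G" "has_finite_mean G"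
    unfolding G_convex_sum
    by (intro is_dist_fn_convex_sum has_finite_mean_convex_sum is_dist_fn_step
        has_finite_mean_step; simp)+
qed

lemma mixture_dist_fn:
  assumes "F \<in> mixtures K Fs" "\<forall>i\<in>{1..K}. is_dist_fn (Fs i) \<and> has_finite_mean (Fs i)"
  shows "is_dist_fn F" "has_finite_mean F"
  using assms unfolding mixtures_def prob_simplex_def
  by (auto intro!: is_dist_fn_convex_sum has_finite_mean_convex_sum)

lemma mixtures_nonempty:
  assumes "1 \<le> K"
  shows "mixtures K Fs \<noteq> {}"
proof -
  have "(\<lambda>i. if i = 1 then 1 else 0) \<in> prob_simplex K"
    using assms unfolding prob_simplex_def by simp
  then show ?thesis
    unfolding mixtures_def by blast
qed

lemma abs_VaR_le_SUP_mixtures: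
  assumes "\<forall>i\<in>{1..K}. is_dist_fn (Fs i)" "0 < \<alpha>" "\<alpha> < 1" "F \<in> mixtures K Fs"
  shows "\<bar>VaR \<alpha> F\<bar> \<le> (SUP G\<in>mixtures K Fs. \<bar>VaR \<alpha> G\<bar>)"
proof -
  have "\<bar>VaR \<alpha> G\<bar> \<le> (\<Sum>i=1..K. \<bar>VaR \<alpha> (Fs i)\<bar>)" if "G \<in> mixtures K Fs" for G
    using that assms(1-3) unfolding mixtures_def prob_simplex_def
    by (auto intro!: abs_VaR_convex_sum_le member_le_sum)
  then show ?thesis
    by (intro cSUP_upper assms(4) bdd_aboveI2)
qed

section \<open>The derivative of CVaR\<close>

text \<open>Subtracting the limit at \<open>-\<infinity>\<close> makes the integral finite for every \<open>H \<in> L\<close>; for the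
  differences \<open>G - F\<close> of distribution functions that matter here the limit is \<open>0\<close>.\<close>

definition CVaR_deriv :: "real \<Rightarrow> (real \<Rightarrow> real) \<Rightarrow> (real \<Rightarrow> real) \<Rightarrow> real" where
  "CVaR_deriv \<alpha> F H = - (1 / \<alpha>) * (LINT y:{..VaR \<alpha> F}|lborel. H y - Lim at_bot H)"

lemma abs_CVaR_deriv_le:
  assumes "0 < \<alpha>" "H \<in> L_space" "\<And>y. \<bar>H y - Lim at_bot H\<bar> \<le> B"
  shows "\<bar>CVaR_deriv \<alpha> F H\<bar> \<le> (normL H + \<bar>VaR \<alpha> F\<bar> * B) / \<alpha>"
proof -
  let ?g = "\<lambda>t. H t - Lim at_bot H" and ?v = "VaR \<alpha> F"
  have "\<bar>LINT t:{..0}|lborel. ?g t\<bar> \<le> normL H"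
    using L_space_lower_tail(3)[OF assms(2)] unfolding normL_def by linarith
  moreover have "\<bar>(LINT t:{..?v}|lborel. ?g t) - (LINT t:{..0}|lborel. ?g t)\<bar> \<le> B * \<bar>?v - 0\<bar>"
    using L_space_measurable[OF assms(2)] assms(3)
    by (intro abs_set_integral_Iic_diff_le L_space_set_integrable_Iic[OF assms(2)]) auto
  ultimately have "\<bar>LINT t:{..?v}|lborel. ?g t\<bar> \<le> normL H + \<bar>?v\<bar> * B"
    by (simp add: mult.commute)
  then show ?thesis
    unfolding CVaR_deriv_def using assms(1) by (simp add: abs_mult divide_right_mono)
qed

lemma bounded_linear_L_CVaR_deriv:
  assumes "0 < \<alpha>"
  shows "bounded_linear_L (CVaR_deriv \<alpha> F)"
  unfolding bounded_linear_L_def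
proof (intro conjI ballI allI exI[of _ "(1 + 2 * \<bar>VaR \<alpha> F\<bar>) / \<alpha>"])
  fix H1 H2 and a b :: real
  assume H1: "H1 \<in> L_space" and H2: "H2 \<in> L_space"
  have "Lim at_bot (\<lambda>x. a * H1 x + b * H2 x) = a * Lim at_bot H1 + b * Lim at_bot H2"
    using L_space_lower_tail(1)[OF H1] L_space_lower_tail(1)[OF H2]
    by (intro tendsto_Lim trivial_limit_at_bot_linorder tendsto_intros)
  then have "(\<lambda>y. a * H1 y + b * H2 y - Lim at_bot (\<lambda>x. a * H1 x + b * H2 x))
      = (\<lambda>y. a * (H1 y - Lim at_bot H1) + b * (H2 y - Lim at_bot H2))"
    by (simp add: algebra_simps)
  moreover have "(LINT y:{..VaR \<alpha> F}|lborel. a * (H1 y - Lim at_bot H1) + b * (H2 y - Lim at_bot H2))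
      = a * (LINT y:{..VaR \<alpha> F}|lborel. H1 y - Lim at_bot H1)
        + b * (LINT y:{..VaR \<alpha> F}|lborel. H2 y - Lim at_bot H2)"
    using L_space_set_integrable_Iic[OF H1] L_space_set_integrable_Iic[OF H2]
    by (subst set_integral_add) auto
  ultimately show "CVaR_deriv \<alpha> F (\<lambda>x. a * H1 x + b * H2 x)
      = a * CVaR_deriv \<alpha> F H1 + b * CVaR_deriv \<alpha> F H2"
    unfolding CVaR_deriv_def by (simp add: algebra_simps)
next
  fix H assume H: "H \<in> L_space"
  have "sup_norm H \<le> normL H"
    unfolding normL_def by simp
  then have "normL H + \<bar>VaR \<alpha> F\<bar> * (2 * sup_norm H) \<le> (1 + 2 * \<bar>VaR \<alpha> F\<bar>) * normL H"
    by (simp add: algebra_simps mult_right_mono)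
  then have "(normL H + \<bar>VaR \<alpha> F\<bar> * (2 * sup_norm H)) / \<alpha> \<le> (1 + 2 * \<bar>VaR \<alpha> F\<bar>) * normL H / \<alpha>"
    using assms by (intro divide_right_mono) auto
  with abs_CVaR_deriv_le[OF assms H L_space_abs_sub_Lim_le[OF H], of F]
  show "\<bar>CVaR_deriv \<alpha> F H\<bar> \<le> (1 + 2 * \<bar>VaR \<alpha> F\<bar>) / \<alpha> * normL H"
    by simp
qed

lemma abs_CVaR_deriv_diff_le:
  assumes F: "is_dist_fn F" "has_finite_mean F" and G: "is_dist_fn G" "has_finite_mean G"
    and \<alpha>: "0 < \<alpha>" and v: "\<bar>VaR \<alpha> F\<bar> \<le> v"
  shows "\<bar>CVaR_deriv \<alpha> F (\<lambda>x. G x - F x)\<bar> \<le> (1 + v) / \<alpha> * normL (\<lambda>x. G x - F x)"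
proof -
  let ?H = "\<lambda>x. G x - F x"
  have H: "?H \<in> L_space"
    by (rule diff_in_L_space[OF F G])
  have "\<bar>?H y - Lim at_bot ?H\<bar> \<le> sup_norm ?H" for y
    using abs_le_sup_norm[OF L_space_bounded[OF H]] by (simp add: Lim_at_bot_dist_fn_diff[OF F(1) G(1)])
  then have "\<bar>CVaR_deriv \<alpha> F ?H\<bar> \<le> (normL ?H + \<bar>VaR \<alpha> F\<bar> * sup_norm ?H) / \<alpha>"
    by (rule abs_CVaR_deriv_le[OF \<alpha> H])
  also have "\<dots> \<le> (normL ?H + v * normL ?H) / \<alpha>"
    using sup_norm_le_normL abs_le_sup_norm[OF L_space_bounded[OF H], of 0] v \<alpha>
    by (intro divide_right_mono add_left_mono mult_mono) auto
  finally show ?thesis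
    by (simp add: algebra_simps add_divide_distrib)
qed

lemma VaR_gap_integral_bounds_of_le:
  fixes F G :: "real \<Rightarrow> real"
  assumes F: "is_dist_fn F" and G: "is_dist_fn G" and \<alpha>: "0 < \<alpha>" "\<alpha> < 1"
    and close: "\<And>y. \<bar>G y - F y\<bar> \<le> \<delta>"
    and up: "\<alpha> + \<delta> \<le> F (VaR \<alpha> F + b * \<delta>)"
    and le: "VaR \<alpha> F \<le> VaR \<alpha> G"
  shows "0 \<le> (LINT y:{VaR \<alpha> F<..VaR \<alpha> G}|lborel. \<alpha> - G y)"
    and "(LINT y:{VaR \<alpha> F<..VaR \<alpha> G}|lborel. \<alpha> - G y) \<le> b * \<delta>\<^sup>2"
proof -
  let ?vF = "VaR \<alpha> F" and ?vG = "VaR \<alpha> G"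
  note F_le = VaR_le_iff[OF F \<alpha>] and G_le = VaR_le_iff[OF G \<alpha>]
  have \<delta>: "0 \<le> \<delta>"
    using close[of 0] by linarith
  have "\<alpha> \<le> G (?vF + b * \<delta>)"
    using up close[of "?vF + b * \<delta>"] by linarith
  then have "?vG - ?vF \<le> b * \<delta>"
    using G_le by force
  have integrand: "AE y in lborel. y \<in> {?vF<..?vG} \<longrightarrow> 0 \<le> \<alpha> - G y \<and> \<alpha> - G y \<le> \<delta>"
  proof (rule eventually_mono[OF AE_lborel_singleton[of ?vG]], intro impI conjI)
    fix y assume "y \<noteq> ?vG" "y \<in> {?vF<..?vG}"
    then show "0 \<le> \<alpha> - G y" "\<alpha> - G y \<le> \<delta>"
      using G_le[of y] F_le[of y] close[of y] by auto
  qed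
  show "0 \<le> (LINT y:{?vF<..?vG}|lborel. \<alpha> - G y)"
    unfolding set_lebesgue_integral_def using integrand
    by (intro integral_nonneg_AE) (auto elim!: eventually_mono simp: indicator_def)
  have "(LINT y:{?vF<..?vG}|lborel. \<alpha> - G y) \<le> \<delta> * (?vG - ?vF)"
    by (rule set_integral_le_Ioc_bound[OF set_integrable_Ioc_dist_fn(1)[OF G] \<delta> le])
      (use integrand in \<open>auto elim!: eventually_mono\<close>)
  also have "\<dots> \<le> b * \<delta>\<^sup>2"
    using mult_left_mono[OF \<open>?vG - ?vF \<le> b * \<delta>\<close> \<delta>] by (simp add: power2_eq_square algebra_simps)
  finally show "(LINT y:{?vF<..?vG}|lborel. \<alpha> - G y) \<le> b * \<delta>\<^sup>2" .
qed

lemma VaR_gap_integral_bounds_of_ge: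
  fixes F G :: "real \<Rightarrow> real"
  assumes F: "is_dist_fn F" and G: "is_dist_fn G" and \<alpha>: "0 < \<alpha>" "\<alpha> < 1" and b: "0 \<le> b"
    and close: "\<And>y. \<bar>G y - F y\<bar> \<le> \<delta>"
    and down: "0 < \<delta> \<Longrightarrow> F (VaR \<alpha> F - b * \<delta>) \<le> \<alpha> - \<delta>"
    and le: "VaR \<alpha> G \<le> VaR \<alpha> F"
  shows "0 \<le> (LINT y:{VaR \<alpha> G<..VaR \<alpha> F}|lborel. G y - \<alpha>)"
    and "(LINT y:{VaR \<alpha> G<..VaR \<alpha> F}|lborel. G y - \<alpha>) \<le> b * \<delta>\<^sup>2"
proof -
  let ?vF = "VaR \<alpha> F" and ?vG = "VaR \<alpha> G"
  note F_le = VaR_le_iff[OF F \<alpha>] and G_le = VaR_le_iff[OF G \<alpha>]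
  have \<delta>: "0 \<le> \<delta>"
    using close[of 0] by linarith
  have integrand: "AE y in lborel. y \<in> {?vG<..?vF} \<longrightarrow>
      0 \<le> G y - \<alpha> \<and> G y - \<alpha> \<le> \<delta> * indicator {?vF - b * \<delta><..?vF} y"
  proof (rule eventually_mono[OF AE_lborel_singleton[of ?vF]], intro impI conjI)
    fix y assume "y \<noteq> ?vF" "y \<in> {?vG<..?vF}"
    then have y: "?vG \<le> y" "y < ?vF" by auto
    then show "0 \<le> G y - \<alpha>"
      using G_le[of y] by simp
    have "F y < \<alpha>"
      using F_le[of y] y by simp
    show "G y - \<alpha> \<le> \<delta> * indicator {?vF - b * \<delta><..?vF} y"
    proof (cases "?vF - b * \<delta> < y")
      case True
      then show ?thesis
        using \<open>F y < \<alpha>\<close> close[of y] y by (simp add: indicator_def)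
    next
      case False
      \<comment> \<open>Below \<open>VaR \<alpha> F - b \<delta>\<close> the growth condition forces \<open>G \<le> \<alpha>\<close>: the integrand vanishes.\<close>
      have "G y \<le> \<alpha>"
      proof (cases "\<delta> = 0")
        case True
        then show ?thesis using \<open>F y < \<alpha>\<close> close[of y] by simp
      next
        case False
        then have "G y \<le> G (?vF - b * \<delta>)"
          using \<open>\<not> ?vF - b * \<delta> < y\<close> monoD[OF is_dist_fnD(1)[OF G]] by simp
        then show ?thesis
          using down close[of "?vF - b * \<delta>"] \<delta> False by force
      qed
      then show ?thesis
        using False \<delta> by (simp add: indicator_def)
    qed
  qed
  show "0 \<le> (LINT y:{?vG<..?vF}|lborel. G y - \<alpha>)"
    unfolding set_lebesgue_integral_def using integrand
    by (intro integral_nonneg_AE) (auto elim!: eventually_mono simp: indicator_def)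
  have "(LINT y:{?vG<..?vF}|lborel. G y - \<alpha>) \<le> \<delta> * (?vF - (?vF - b * \<delta>))"
    using set_integrable_Ioc_dist_fn(2)[OF G]
    by (intro set_integral_le_Ioc_bound \<delta>) (use integrand b \<delta> in \<open>auto elim!: eventually_mono\<close>)
  then show "(LINT y:{?vG<..?vF}|lborel. G y - \<alpha>) \<le> b * \<delta>\<^sup>2"
    by (simp add: power2_eq_square algebra_simps)
qed

lemma VaR_gap_integral_le:
  fixes F G :: "real \<Rightarrow> real"
  assumes F: "is_dist_fn F" and G: "is_dist_fn G" "\<And>c. set_integrable lborel {..c} G"
    and \<alpha>: "0 < \<alpha>" "\<alpha> < 1" and b: "0 < b"
    and close: "\<And>y. \<bar>G y - F y\<bar> \<le> \<delta>"
    and up: "\<alpha> + \<delta> \<le> F (VaR \<alpha> F + b * \<delta>)"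
    and down: "0 < \<delta> \<Longrightarrow> F (VaR \<alpha> F - b * \<delta>) \<le> \<alpha> - \<delta>"
  shows "\<bar>\<alpha> * (VaR \<alpha> G - VaR \<alpha> F)
      - ((LINT y:{..VaR \<alpha> G}|lborel. G y) - (LINT y:{..VaR \<alpha> F}|lborel. G y))\<bar> \<le> b * \<delta>\<^sup>2"
proof (cases "VaR \<alpha> F \<le> VaR \<alpha> G")
  case True
  then show ?thesis
    using VaR_gap_integral_bounds_of_le[OF F G(1) \<alpha> close up True]
      set_integral_Ioc_const_diff[OF G(2) True, of \<alpha>] by simp
next
  case False
  then have le: "VaR \<alpha> G \<le> VaR \<alpha> F" by simp
  have "(LINT y:{VaR \<alpha> G<..VaR \<alpha> F}|lborel. G y - \<alpha>)
      = - (LINT y:{VaR \<alpha> G<..VaR \<alpha> F}|lborel. \<alpha> - G y)"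
    using set_integral_uminus[OF set_integrable_Ioc_dist_fn(1)[OF G(1)]] by simp
  then show ?thesis
    using VaR_gap_integral_bounds_of_ge[OF F G(1) \<alpha> less_imp_le[OF b] close down le]
      set_integral_Ioc_const_diff[OF G(2) le, of \<alpha>] by (simp add: algebra_simps)
qed

lemma CVaR_second_order_bound:
  assumes F: "is_dist_fn F" "has_finite_mean F" and G: "is_dist_fn G" "has_finite_mean G"
    and \<alpha>: "0 < \<alpha>" "\<alpha> < 1" and b: "0 < b"
    and growth: "\<forall>y\<in>{-M..M}. \<bar>F (VaR \<alpha> F + b * y) - \<alpha>\<bar> \<ge> \<bar>y\<bar>"
    and close: "normL (\<lambda>x. F x - G x) \<le> M"
  shows "\<bar>CVaR \<alpha> G - CVaR \<alpha> F - CVaR_deriv \<alpha> F (\<lambda>x. G x - F x)\<bar>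
      \<le> 1/2 * (2 * b / \<alpha>) * (normL (\<lambda>x. G x - F x))\<^sup>2"
proof -
  let ?H = "\<lambda>x. G x - F x" and ?vF = "VaR \<alpha> F" and ?vG = "VaR \<alpha> G"
  define \<delta> where "\<delta> = sup_norm ?H"
  have close_\<delta>: "\<bar>G y - F y\<bar> \<le> \<delta>" for y
    unfolding \<delta>_def by (rule abs_le_sup_norm[OF L_space_bounded[OF diff_in_L_space[OF F G]]])
  then have \<delta>: "0 \<le> \<delta>"
    using abs_ge_zero order_trans by blast
  have "\<delta> \<le> M"
    using sup_norm_le_normL[of "\<lambda>x. F x - G x"] sup_norm_diff_commute[of F G] close
    unfolding \<delta>_def by linarith
  note F_le = VaR_le_iff[OF F(1) \<alpha>]
  have "\<alpha> \<le> F (?vF + b * \<delta>)"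
    using F_le[of "?vF + b * \<delta>"] b \<delta> by simp
  moreover have "\<delta> \<le> \<bar>F (?vF + b * \<delta>) - \<alpha>\<bar>"
    using growth[rule_format, of \<delta>] \<delta> \<open>\<delta> \<le> M\<close> by simp
  ultimately have up: "\<alpha> + \<delta> \<le> F (?vF + b * \<delta>)"
    by linarith
  have down: "F (?vF - b * \<delta>) \<le> \<alpha> - \<delta>" if "0 < \<delta>"
  proof -
    have "F (?vF - b * \<delta>) < \<alpha>"
      using F_le[of "?vF - b * \<delta>"] mult_pos_pos[OF b that] by simp
    moreover have "\<delta> \<le> \<bar>F (?vF - b * \<delta>) - \<alpha>\<bar>"
      using growth[rule_format, of "- \<delta>"] \<delta> \<open>\<delta> \<le> M\<close> by simp
    ultimately show ?thesis
      by linarith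
  qed
  have "CVaR \<alpha> G - CVaR \<alpha> F - CVaR_deriv \<alpha> F ?H
      = (\<alpha> * (?vG - ?vF) - ((LINT y:{..?vG}|lborel. G y) - (LINT y:{..?vF}|lborel. G y))) / \<alpha>"
    using \<alpha> dist_fn_set_integrable_Iic[OF F] dist_fn_set_integrable_Iic[OF G]
    by (simp add: CVaR_def CVaR_deriv_def Lim_at_bot_dist_fn_diff[OF F(1) G(1)] field_simps)
  also have "\<bar>\<dots>\<bar> \<le> b * \<delta>\<^sup>2 / \<alpha>"
    using VaR_gap_integral_le[OF F(1) G(1) dist_fn_set_integrable_Iic[OF G] \<alpha> b close_\<delta> up down] \<alpha>
    by (simp add: divide_right_mono)
  also have "\<dots> \<le> b * (normL ?H)\<^sup>2 / \<alpha>"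
    using \<alpha> b \<delta> sup_norm_le_normL[of ?H]
    by (intro divide_right_mono mult_left_mono power_mono) (auto simp: \<delta>_def)
  finally show ?thesis
    by simp
qed

theorem proposition26:
  fixes K :: nat and Fs :: "nat \<Rightarrow> real \<Rightarrow> real"
    and \<alpha> b\<^sub>\<alpha> M\<^sub>\<alpha> M0 :: real
  assumes "1 \<le> K"
    and "\<forall>i\<in>{1..K}. is_dist_fn (Fs i)"
    and "\<forall>i\<in>{1..K}. Fs i \<in> L_space"
    and "0 < \<alpha>" and "\<alpha> < 1"
    and "0 < b\<^sub>\<alpha>"
    and "\<forall>F\<in>mixtures K Fs. \<forall>G\<in>mixtures K Fs. normL (\<lambda>x. F x - G x) \<le> M\<^sub>\<alpha>"
    and "\<forall>F\<in>mixtures K Fs. \<forall>y\<in>{-M\<^sub>\<alpha>..M\<^sub>\<alpha>}.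
           \<bar>F (VaR \<alpha> F + b\<^sub>\<alpha> * y) - \<alpha>\<bar> \<ge> \<bar>y\<bar>"
    and "0 < M0" and "M0 < M\<^sub>\<alpha>"
  shows "smooth_EDPM K Fs (CVaR \<alpha>)
           ((1 + (SUP F\<in>mixtures K Fs. \<bar>VaR \<alpha> F\<bar>)) / \<alpha>) (2 * b\<^sub>\<alpha> / \<alpha>) M0"
proof -
  let ?v = "SUP F\<in>mixtures K Fs. \<bar>VaR \<alpha> F\<bar>"
  have "\<forall>i\<in>{1..K}. is_dist_fn (Fs i) \<and> has_finite_mean (Fs i)"
    using assms(2,3) has_finite_mean_if_L_space by blast
  then have dist_fn: "is_dist_fn G \<and> has_finite_mean G" if "G \<in> mixtures K Fs \<union> empirical" for G
    using that mixture_dist_fn empirical_dist_fn by blast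
  have VaR_le: "\<bar>VaR \<alpha> F\<bar> \<le> ?v" if "F \<in> mixtures K Fs" for F
    using abs_VaR_le_SUP_mixtures[OF assms(2,4,5) that] .
  then have "0 \<le> ?v"
    using mixtures_nonempty[OF assms(1)] by (meson abs_ge_zero ex_in_conv order_trans)
  show ?thesis
    unfolding smooth_EDPM_def
  proof (intro conjI exI[of _ "CVaR_deriv \<alpha>"] ballI)
    fix F assume "F \<in> L_space"
    show "bounded_linear_L (CVaR_deriv \<alpha> F)"
      by (rule bounded_linear_L_CVaR_deriv[OF assms(4)])
  next
    fix F G assume "F \<in> mixtures K Fs" "G \<in> mixtures K Fs \<union> empirical"
    with dist_fn VaR_le show "\<bar>CVaR_deriv \<alpha> F (\<lambda>x. G x - F x)\<bar> \<le> (1 + ?v) / \<alpha> * normL (\<lambda>x. G x - F x)"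
      by (intro abs_CVaR_deriv_diff_le assms(4)) auto
  next
    fix F G assume F: "F \<in> mixtures K Fs"
      and G: "G \<in> mixtures K Fs \<union> {f \<in> empirical. normL (\<lambda>x. F x - f x) \<le> M0}"
    then have "normL (\<lambda>x. F x - G x) \<le> M\<^sub>\<alpha>"
      using assms(7,10) by fastforce
    moreover have "is_dist_fn F" "has_finite_mean F" "is_dist_fn G" "has_finite_mean G"
      using F G dist_fn by auto
    ultimately show "\<bar>CVaR \<alpha> G - CVaR \<alpha> F - CVaR_deriv \<alpha> F (\<lambda>x. G x - F x)\<bar>
        \<le> 1/2 * (2 * b\<^sub>\<alpha> / \<alpha>) * (normL (\<lambda>x. G x - F x))\<^sup>2"
      using CVaR_second_order_bound assms(4-6) bspec[OF assms(8) F] by blast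
  qed (use assms \<open>0 \<le> ?v\<close> in auto)
qed

end
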